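(* Let $n\ge1$, $N\ge0$ be integers and $a,q,x$ generic nonzero complex parameters. For $\lambda\in\Lambda_{nN}$ define $$A_\lambda(a,q,x,n,N)=\prod_{1\leq i\leq j\leq n}\frac{E(ax^{2-i-j}q^{\lambda_i+\lambda_j})}{E(ax^{2-i-j})}\prod_{1\leq i<j\leq n}\frac{(ax^{3-i-j};q)_{\lambda_i+\lambda_j}}{(aqx^{1-i-j};q)_{\lambda_i+\lambda_j}}\cdot\frac{(ax^{1-n};q,x)_\lambda}{(aq^{N+1};q,x)_\lambda}$$ and $$B_\lambda(q,x,n,N)=\prod_{i=1}^n q^{\lambda_i}x^{2(i-1)\lambda_i}\prod_{1\leq i<j\leq n}\frac{E(x^{j-i}q^{\lambda_i-\lambda_j})}{E(x^{j-i})}\frac{(x^{j-i+1};q)_{\lambda_i-\lambda_j}}{(qx^{j-i-1};q)_{\lambda_i-\lambda_j}}\cdot\frac{(q^{-N};q,x)_\lambda}{(qx^{n-1};q,x)_\lambda}.$$ Then $$A_\lambda(a,q,x,n,N)=A_{\lambda'}(aqx,x^{-1},q^{-1},N,n),\qquad B_\lambda(q,x,n,N)=B_{\lambda'}(x^{-1},q^{-1},N,n),$$ where $\lambda'\in\Lambda_{Nn}$ is the conjugate partition of $\lambda$.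
   Context: Fix $p\in\mathbb C$ with $|p|<1$. For nonzero $y$, $E(y)=\prod_{j=0}^\infty(1-yp^j)(1-p^{j+1}/y)$, $E(y_1,\dots,y_m)=\prod_s E(y_s)$. For a base $Q$ and integer $k\ge0$, $(y;Q)_k=\prod_{j=0}^{k-1}E(yQ^j)$; for $k<0$, $(y;Q)_k=1/(yQ^{k};Q)_{-k}$. For $\lambda\in\mathbb Z^n$ and bases $Q,X$, $(y;Q,X)_\lambda=\prod_{j=1}^n(yX^{1-j};Q)_{\lambda_j}$. Let $\Lambda_{nN}=\{\lambda\in\mathbb Z^n: N\ge\lambda_1\ge\dots\ge\lambda_n\ge0\}$; for $\lambda\in\Lambda_{nN}$ its conjugate is $\lambda'\in\Lambda_{Nn}$ with $\lambda'_j=\#\{i:\lambda_i\ge j\}$, $j=1,\dots,N$. In $A_{\lambda'}(aqx,x^{-1},q^{-1},N,n)$ and $B_{\lambda'}(x^{-1},q^{-1},N,n)$ the defining formulas are applied with $a,q,x,n,N$ replaced by $aqx,x^{-1},q^{-1},N,n$ respectively. *)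

theory Defs
  imports "HOL-Analysis.Analysis"
begin

definition E :: "complex \<Rightarrow> complex \<Rightarrow> complex" where
  "E p y = (\<Prod>j. (1 - y * p ^ j) * (1 - p ^ (j + 1) / y))"

definition qpoch :: "complex \<Rightarrow> complex \<Rightarrow> complex \<Rightarrow> int \<Rightarrow> complex" where
  "qpoch p y Q k =
     (if k \<ge> 0 then (\<Prod>j<nat k. E p (y * Q ^ j))
      else 1 / (\<Prod>j<nat (- k). E p (y * Q powi k * Q ^ j)))"

definition qpochL :: "complex \<Rightarrow> complex \<Rightarrow> complex \<Rightarrow> complex \<Rightarrow> int list \<Rightarrow> complex" where
  "qpochL p y Q X l = (\<Prod>j\<in>{1..length l}. qpoch p (y * X powi (1 - int j)) Q (l ! (j - 1)))"

definition Lambda :: "nat \<Rightarrow> nat \<Rightarrow> int list set" where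
  "Lambda n N = {l. length l = n \<and> (\<forall>i<n. 0 \<le> l ! i \<and> l ! i \<le> int N) \<and>
                    (\<forall>i j. i \<le> j \<longrightarrow> j < n \<longrightarrow> l ! j \<le> l ! i)}"

definition conjp :: "nat \<Rightarrow> int list \<Rightarrow> int list" where
  "conjp N l = map (\<lambda>j. int (card {i. i < length l \<and> int j \<le> l ! i})) [1..<N + 1]"

definition A :: "complex \<Rightarrow> complex \<Rightarrow> complex \<Rightarrow> complex \<Rightarrow> nat \<Rightarrow> nat \<Rightarrow> int list \<Rightarrow> complex" where
  "A p a q x n N l =
    (let lam = (\<lambda>i::nat. l ! (i - 1)) in
      (\<Prod>i\<in>{1..n}. \<Prod>j\<in>{i..n}.
          E p (a * x powi (2 - int i - int j) * q powi (lam i + lam j))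
          / E p (a * x powi (2 - int i - int j)))
    * (\<Prod>i\<in>{1..n}. \<Prod>j\<in>{i<..n}.
          qpoch p (a * x powi (3 - int i - int j)) q (lam i + lam j)
          / qpoch p (a * q * x powi (1 - int i - int j)) q (lam i + lam j))
    * (qpochL p (a * x powi (1 - int n)) q x l / qpochL p (a * q ^ (N + 1)) q x l))"

definition B :: "complex \<Rightarrow> complex \<Rightarrow> complex \<Rightarrow> nat \<Rightarrow> nat \<Rightarrow> int list \<Rightarrow> complex" where
  "B p q x n N l =
    (let lam = (\<lambda>i::nat. l ! (i - 1)) in
      (\<Prod>i\<in>{1..n}. q powi (lam i) * x powi (2 * (int i - 1) * lam i))
    * (\<Prod>i\<in>{1..n}. \<Prod>j\<in>{i<..n}.
          (E p (x powi (int j - int i) * q powi (lam i - lam j)) / E p (x powi (int j - int i)))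
          * (qpoch p (x powi (int j - int i + 1)) q (lam i - lam j)
             / qpoch p (q * x powi (int j - int i - 1)) q (lam i - lam j)))
    * (qpochL p (q powi (- int N)) q x l / qpochL p (q * x ^ (n - 1)) q x l))"

end

theory Submission
  imports Defs
begin

(* Write f(k, m) = E(a q^k x^m). Then A_lambda is a product of ratios of values of f on the
   lattice Z^2, and A_lambda'(aqx, 1/x, 1/q, N, n) is the same expression for the reflected lattice
   function (k, m) |-> f(1 - m, 1 - k). Both sides are 1 for the empty partition, so by induction on
   |lambda| it suffices to compare the factors by which they change when a box is added to row k of
   lambda, i.e. to row lambda_k + 1 of lambda'. On each side this factor is a product, over the
   other rows, of ratios of one auxiliary function Phi evaluated along the boundary of the Young
   diagram; the two boundary products telescope against each other, which leaves an identity among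
   a few values of f. For B the lattice function is g(k, m) = E(q^k x^m) with the reflection
   (k, m) |-> g(-m, -k); here the functional equation E(1/y) = -E(y)/y is needed as well, because
   the differences lambda_i - lambda_k of the rows above the new box decrease. *)

lemma convergent_prod_one_minus_geometric:
  fixes p c :: complex
  assumes "norm p < 1"
  shows "convergent_prod (\<lambda>j. 1 - c * p ^ j)"
proof -
  have "summable (\<lambda>j. norm c * norm p ^ j)"
    using assms by (intro summable_mult summable_geometric) auto
  then have "summable (\<lambda>j. norm ((1 - c * p ^ j) - 1))"
    by (simp add: norm_mult norm_power)
  then show ?thesis
    by (intro abs_convergent_prod_imp_convergent_prod summable_imp_abs_convergent_prod)
qed

lemma prodinf_eq_prodinf_Suc_mult:
  fixes f :: "nat \<Rightarrow> complex"
  assumes "convergent_prod f"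
  shows "prodinf f = prodinf (\<lambda>n. f (Suc n)) * f 0"
  using assms by (metis convergent_prod_Suc_iff convergent_prod_has_prod has_prod_Suc_imp has_prod_unique)


lemma E_inverse:
  assumes p: "norm p < 1" and y: "y \<noteq> 0"
  shows "E p (inverse y) = - E p y / y"
proof -
  define F where "F j = 1 - y * p ^ j" for j
  define G where "G j = 1 - (1 / y) * p ^ j" for j
  have F: "convergent_prod F" and G: "convergent_prod G"
    unfolding F_def G_def by (intro convergent_prod_one_minus_geometric p)+
  then have FS: "convergent_prod (\<lambda>j. F (Suc j))" and GS: "convergent_prod (\<lambda>j. G (Suc j))"
    by simp_all
  have "E p y = prodinf F * prodinf (\<lambda>j. G (Suc j))"
    unfolding E_def prodinf_mult[OF F GS] by (simp add: F_def G_def field_simps)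
  also have "prodinf F = prodinf (\<lambda>j. F (Suc j)) * (1 - y)"
    using prodinf_eq_prodinf_Suc_mult[OF F] by (simp add: F_def)
  finally have Ey: "E p y = prodinf (\<lambda>j. F (Suc j)) * (1 - y) * prodinf (\<lambda>j. G (Suc j))" .
  have "E p (inverse y) = prodinf G * prodinf (\<lambda>j. F (Suc j))"
    unfolding E_def prodinf_mult[OF G FS] by (simp add: F_def G_def field_simps)
  also have "prodinf G = prodinf (\<lambda>j. G (Suc j)) * (1 - 1 / y)"
    using prodinf_eq_prodinf_Suc_mult[OF G] by (simp add: G_def)
  finally show ?thesis
    unfolding Ey using y by (simp add: field_simps)
qed

lemma prod_split_at:
  fixes f :: "nat \<Rightarrow> 'a::comm_monoid_mult"
  assumes "k \<in> {1..n}"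
  shows "prod f {1..n} = prod f {1..<k} * f k * prod f {k<..n}"
proof -
  have "{1..n} = ({1..<k} \<union> {k}) \<union> {k<..n}"
    using assms by auto
  also have "prod f \<dots> = prod f ({1..<k} \<union> {k}) * prod f {k<..n}"
    by (intro prod.union_disjoint) auto
  finally show ?thesis
    by (simp add: mult_ac)
qed

lemma prod_agree_except:
  fixes g g' :: "'b \<Rightarrow> 'a::field"
  assumes "finite S" "k \<in> S" "\<And>j. j \<in> S \<Longrightarrow> j \<noteq> k \<Longrightarrow> g' j = g j" "g k \<noteq> 0"
  shows "prod g' S = prod g S * (g' k / g k)"
proof -
  have "prod g' (S - {k}) = prod g (S - {k})"
    using assms by (intro prod.cong) auto
  then show ?thesis
    using assms by (simp add: prod.remove)
qed

lemma prod_pairs_agree_except: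
  fixes F F' :: "nat \<Rightarrow> nat \<Rightarrow> 'a::field"
  assumes k: "k \<in> {1..n}"
    and agree: "\<And>i j. i \<noteq> k \<Longrightarrow> j \<noteq> k \<Longrightarrow> F' i j = F i j"
    and nz: "\<And>i j. F i j \<noteq> 0"
  shows "(\<Prod>i\<in>{1..n}. \<Prod>j\<in>{i<..n}. F' i j) = (\<Prod>i\<in>{1..n}. \<Prod>j\<in>{i<..n}. F i j) *
     ((\<Prod>i\<in>{1..<k}. F' i k / F i k) * (\<Prod>j\<in>{k<..n}. F' k j / F k j))"
proof -
  define r where "r i j = F' i j / F i j" for i j
  have "(\<Prod>i\<in>{1..n}. \<Prod>j\<in>{i<..n}. F' i j) = (\<Prod>i\<in>{1..n}. \<Prod>j\<in>{i<..n}. F i j * r i j)"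
    using nz by (simp add: r_def)
  also have "\<dots> = (\<Prod>i\<in>{1..n}. \<Prod>j\<in>{i<..n}. F i j) * (\<Prod>(i, j)\<in>Sigma {1..n} (\<lambda>i. {i<..n}). r i j)"
    by (simp add: prod.distrib prod.Sigma)
  also have "(\<Prod>(i, j)\<in>Sigma {1..n} (\<lambda>i. {i<..n}). r i j) = (\<Prod>(i, j)\<in>{1..<k} \<times> {k} \<union> {k} \<times> {k<..n}. r i j)"
  proof (intro prod.mono_neutral_right ballI)
    fix ij assume "ij \<in> Sigma {1..n} (\<lambda>i. {i<..n}) - ({1..<k} \<times> {k} \<union> {k} \<times> {k<..n})"
    then show "(case ij of (i, j) \<Rightarrow> r i j) = 1"
      using k agree nz by (cases ij) (auto simp: r_def)
  qed (use k in auto)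
  also have "\<dots> = (\<Prod>i\<in>{1..<k}. r i k) * (\<Prod>j\<in>{k<..n}. r k j)"
    by (subst prod.union_disjoint) (auto simp: prod.cartesian_product[symmetric])
  finally show ?thesis
    by (simp add: r_def)
qed

lemma prod_upper_triangle_split:
  fixes F :: "nat \<Rightarrow> nat \<Rightarrow> 'a::comm_monoid_mult"
  shows "(\<Prod>i\<in>{1..n}. \<Prod>j\<in>{i..n}. F i j) = (\<Prod>i\<in>{1..n}. F i i) * (\<Prod>i\<in>{1..n}. \<Prod>j\<in>{i<..n}. F i j)"
proof -
  have "(\<Prod>j\<in>{i..n}. F i j) = F i i * (\<Prod>j\<in>{i<..n}. F i j)" if "i \<in> {1..n}" for i
  proof -
    have "{i..n} = insert i {i<..n}"
      using that by auto
    then show ?thesis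
      by simp
  qed
  then show ?thesis
    by (simp add: prod.distrib)
qed

lemma prod_telescope_int:
  fixes f :: "int \<Rightarrow> 'a::field"
  assumes "\<And>a. f a \<noteq> 0"
  shows "(\<Prod>j\<in>{1..n}. f (int j) / f (int j - 1)) = f (int n) / f 0"
  by (induction n) (simp_all add: assms atLeastAtMostSuc_conv)



section \<open>Partitions in a box\<close>

text \<open>A partition \<open>\<lambda> \<in> \<Lambda>\<^sub>n\<^sub>N\<close> is a function with \<open>\<lambda>\<^sub>i = lam i\<close> for \<open>1 \<le> i \<le> n\<close>;
  its values elsewhere play no role.\<close>

definition box_partition :: "nat \<Rightarrow> nat \<Rightarrow> (nat \<Rightarrow> int) \<Rightarrow> bool" where
  "box_partition n N lam \<longleftrightarrow> (\<forall>i\<in>{1..n}. 0 \<le> lam i \<and> lam i \<le> int N) \<and>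
     (\<forall>i j. 1 \<le> i \<longrightarrow> i \<le> j \<longrightarrow> j \<le> n \<longrightarrow> lam j \<le> lam i)"

definition conj_partition :: "nat \<Rightarrow> (nat \<Rightarrow> int) \<Rightarrow> nat \<Rightarrow> int" where
  "conj_partition n lam i = int (card {j\<in>{1..n}. int i \<le> lam j})"

lemma box_partition_conj_partition:
  assumes "box_partition n N lam"
  shows "box_partition N n (conj_partition n lam)"
  unfolding box_partition_def
proof (intro conjI allI impI ballI)
  fix i
  have "card {j\<in>{1..n}. int i \<le> lam j} \<le> card {1..n}"
    by (intro card_mono) auto
  then show "conj_partition n lam i \<le> int n"
    by (simp add: conj_partition_def)
next
  fix i j :: nat assume "i \<le> j"
  then have "card {j'\<in>{1..n}. int j \<le> lam j'} \<le> card {j'\<in>{1..n}. int i \<le> lam j'}"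
    by (intro card_mono) auto
  then show "conj_partition n lam j \<le> conj_partition n lam i"
    by (simp add: conj_partition_def)
qed (simp add: conj_partition_def)

lemma conj_partition_empty:
  assumes "\<forall>j\<in>{1..n}. lam j = 0" and "1 \<le> i"
  shows "conj_partition n lam i = 0"
  using assms by (simp add: conj_partition_def)

lemma box_partition_add_box_above:
  assumes "box_partition n N (lam(k := lam k + 1))" and "k \<in> {1..n}" and "i \<in> {1..<k}"
  shows "lam k + 1 \<le> lam i"
proof -
  have "(lam(k := lam k + 1)) k \<le> (lam(k := lam k + 1)) i"
    using assms unfolding box_partition_def by (meson atLeastAtMost_iff atLeastLessThan_iff less_imp_le)
  with assms(3) show ?thesis
    by fastforce
qed

lemma conj_partition_add_box:
  assumes lam: "box_partition n N lam" and lam': "box_partition n N (lam(k := lam k + 1))"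
    and k: "k \<in> {1..n}"
  defines "c \<equiv> nat (lam k + 1)"
  shows "int c = lam k + 1" and "c \<in> {1..N}" and "conj_partition n lam c = int k - 1"
    and "conj_partition n (lam(k := lam k + 1)) = (conj_partition n lam)(c := int k)"
proof -
  have bounds: "0 \<le> lam k" "lam k + 1 \<le> int N"
    using lam lam' k unfolding box_partition_def by (auto dest: bspec[of _ _ k])
  then show c: "int c = lam k + 1" and "c \<in> {1..N}"
    by (auto simp: c_def)
  have above: "lam k + 1 \<le> lam j" if "j \<in> {1..<k}" for j
    using box_partition_add_box_above[OF lam' k that] .
  have below: "lam j \<le> lam k" if "j \<in> {k..n}" for j
    using lam that k unfolding box_partition_def by auto
  have in_col: "int c \<le> lam j \<longleftrightarrow> j < k" if "j \<in> {1..n}" for j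
    using above[of j] below[of j] that c by (cases "j < k") auto
  then have "{j\<in>{1..n}. int c \<le> lam j} = {1..<k}"
    using k by auto
  then show "conj_partition n lam c = int k - 1"
    using k by (simp add: conj_partition_def)
  have "{j\<in>{1..n}. int c \<le> (lam(k := lam k + 1)) j} = {1..k}"
    using in_col k c by auto
  moreover have "{j\<in>{1..n}. int i \<le> (lam(k := lam k + 1)) j} = {j\<in>{1..n}. int i \<le> lam j}"
    if "i \<noteq> c" for i
    using that c by auto
  ultimately show "conj_partition n (lam(k := lam k + 1)) = (conj_partition n lam)(c := int k)"
    by (auto simp: conj_partition_def)
qed

lemma box_partition_remove_box:
  assumes lam: "box_partition n N lam" and nonzero: "\<exists>j\<in>{1..n}. lam j \<noteq> 0"
  obtains k where "k \<in> {1..n}" and "0 < lam k" and "box_partition n N (lam(k := lam k - 1))"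
proof -
  have nonneg: "\<forall>j\<in>{1..n}. 0 \<le> lam j"
    using lam by (simp add: box_partition_def)
  define S where "S = {j\<in>{1..n}. 0 < lam j}"
  have "finite S" and "S \<noteq> {}"
    using nonneg nonzero by (force simp: S_def)+
  define k where "k = Max S"
  have k: "k \<in> {1..n}" and lam_k: "0 < lam k"
    using Max_in[OF \<open>finite S\<close> \<open>S \<noteq> {}\<close>] by (auto simp: k_def S_def)
  have beyond_k: "lam j = 0" if "j \<in> {1..n}" "k < j" for j
  proof -
    have "j \<notin> S"
      using Max_ge[OF \<open>finite S\<close>, of j] that by (auto simp: k_def)
    with that(1) nonneg show ?thesis
      by (force simp: S_def)
  qed
  have "box_partition n N (lam(k := lam k - 1))"
    unfolding box_partition_def
  proof (intro conjI ballI allI impI)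
    fix i assume "i \<in> {1..n}"
    moreover have "lam k \<le> int N"
      using lam k by (simp add: box_partition_def)
    ultimately show "0 \<le> (lam(k := lam k - 1)) i" "(lam(k := lam k - 1)) i \<le> int N"
      using lam lam_k by (auto simp: box_partition_def)
  next
    fix i j :: nat assume ij: "1 \<le> i" "i \<le> j" "j \<le> n"
    then have "lam j \<le> lam i"
      using lam by (simp add: box_partition_def)
    moreover have "lam j = 0" if "i = k" "j \<noteq> k"
      using beyond_k that ij by auto
    ultimately show "(lam(k := lam k - 1)) j \<le> (lam(k := lam k - 1)) i"
      using lam_k by auto
  qed
  with k lam_k show thesis
    by (rule that)
qed

lemma box_partition_induct [consumes 1, case_names empty add_box]:
  assumes "box_partition n N lam"
    and empty: "\<And>lam. \<forall>j\<in>{1..n}. lam j = 0 \<Longrightarrow> P lam"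
    and add_box: "\<And>lam k. box_partition n N lam \<Longrightarrow> box_partition n N (lam(k := lam k + 1)) \<Longrightarrow>
        k \<in> {1..n} \<Longrightarrow> P lam \<Longrightarrow> P (lam(k := lam k + 1))"
  shows "P lam"
  using assms(1)
proof (induction "nat (\<Sum>j\<in>{1..n}. lam j)" arbitrary: lam)
  case 0
  then have nonneg: "\<forall>j\<in>{1..n}. 0 \<le> lam j"
    by (simp add: box_partition_def)
  then have "(\<Sum>j\<in>{1..n}. lam j) = 0"
    using 0 sum_nonneg[of "{1..n}" lam] by simp
  with nonneg show ?case
    by (intro empty) (metis finite_atLeastAtMost sum_nonneg_eq_0_iff)
next
  case (Suc s)
  have "\<exists>j\<in>{1..n}. lam j \<noteq> 0"
  proof (rule ccontr)
    assume "\<not> (\<exists>j\<in>{1..n}. lam j \<noteq> 0)"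
    with Suc.hyps(2) show False
      by simp
  qed
  with Suc.prems obtain k where k: "k \<in> {1..n}" and "0 < lam k"
    and removed: "box_partition n N (lam(k := lam k - 1))"
    by (rule box_partition_remove_box)
  define mu where "mu = lam(k := lam k - 1)"
  have mu: "box_partition n N mu"
    using removed by (simp add: mu_def)
  have lam_eq: "lam = mu(k := mu k + 1)"
    by (simp add: mu_def)
  have "(\<Sum>j\<in>{1..n}-{k}. mu j) = (\<Sum>j\<in>{1..n}-{k}. lam j)"
    by (simp add: mu_def)
  then have "(\<Sum>j\<in>{1..n}. lam j) = (\<Sum>j\<in>{1..n}. mu j) + 1"
    using sum.remove[OF _ k, of lam] sum.remove[OF _ k, of mu] by (simp add: mu_def)
  moreover have "0 \<le> (\<Sum>j\<in>{1..n}. mu j)"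
    using mu by (intro sum_nonneg) (simp add: box_partition_def)
  ultimately have "s = nat (\<Sum>j\<in>{1..n}. mu j)"
    using Suc.hyps(2) by linarith
  with Suc.hyps(1) mu have "P mu"
    by blast
  with add_box[OF mu _ k] Suc.prems show ?case
    unfolding lam_eq by blast
qed

text \<open>With \<open>\<Phi>\<close> evaluated at lattice points \<open>(column, row)\<close>, the two products run over the
  vertical and the horizontal steps of the boundary path of the diagram from \<open>(N, 0)\<close> to
  \<open>(0, n)\<close>, so together they telescope.\<close>

lemma box_partition_boundary_prod:
  fixes Phi :: "int \<Rightarrow> int \<Rightarrow> 'a::field"
  assumes lam: "box_partition n N lam" and nz: "\<And>a b. Phi a b \<noteq> 0"
  shows "(\<Prod>j\<in>{1..n}. Phi (lam j) (int j) / Phi (lam j) (int j - 1)) *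
         (\<Prod>i\<in>{1..N}. Phi (int i - 1) (conj_partition n lam i) / Phi (int i) (conj_partition n lam i))
       = Phi 0 (int n) / Phi (int N) 0"
  using lam
proof (induction rule: box_partition_induct)
  case (empty lam)
  let ?mu = "conj_partition n lam"
  have "(\<Prod>j\<in>{1..n}. Phi (lam j) (int j) / Phi (lam j) (int j - 1)) = Phi 0 (int n) / Phi 0 0"
    using empty prod_telescope_int[of "Phi 0"] nz by simp
  moreover have "(\<Prod>i\<in>{1..N}. Phi (int i) (?mu i) / Phi (int i - 1) (?mu i)) = Phi (int N) 0 / Phi 0 0"
    using empty prod_telescope_int[of "\<lambda>a. Phi a 0"] nz by (simp add: conj_partition_empty)
  ultimately show ?case
    using nz prod_inversef[of "\<lambda>i. Phi (int i) (?mu i) / Phi (int i - 1) (?mu i)" "{1..N}"]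
    by (simp add: comp_def)
next
  case (add_box lam k)
  let ?lam' = "lam(k := lam k + 1)"
  let ?mu = "conj_partition n lam" and ?mu' = "conj_partition n (lam(k := lam k + 1))"
  define c where "c = nat (lam k + 1)"
  note c = conj_partition_add_box[OF add_box.hyps(1-3), folded c_def]
  have rows: "(\<Prod>j\<in>{1..n}. Phi (?lam' j) (int j) / Phi (?lam' j) (int j - 1)) =
      (\<Prod>j\<in>{1..n}. Phi (lam j) (int j) / Phi (lam j) (int j - 1)) *
      (Phi (lam k + 1) (int k) / Phi (lam k + 1) (int k - 1) /
        (Phi (lam k) (int k) / Phi (lam k) (int k - 1)))"
    using add_box.hyps(3) nz by (subst prod_agree_except[of _ k]) auto
  have cols: "(\<Prod>i\<in>{1..N}. Phi (int i - 1) (?mu' i) / Phi (int i) (?mu' i)) =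
      (\<Prod>i\<in>{1..N}. Phi (int i - 1) (?mu i) / Phi (int i) (?mu i)) *
      (Phi (lam k) (int k) / Phi (lam k + 1) (int k) /
        (Phi (lam k) (int k - 1) / Phi (lam k + 1) (int k - 1)))"
    unfolding c(4) using c(1-3) nz by (subst prod_agree_except[of _ c]) auto
  show ?case
    unfolding rows cols using add_box.IH nz by (simp add: field_simps)
qed


section \<open>The lattice form of \<open>A\<close>\<close>

definition A_pair_step :: "(int \<Rightarrow> int \<Rightarrow> complex) \<Rightarrow> int \<Rightarrow> int \<Rightarrow> complex" where
  "A_pair_step f u s = f (s + 1) (2 - u) * f s (3 - u) / (f s (2 - u) * f (s + 1) (1 - u))"

definition A_pair :: "(int \<Rightarrow> int \<Rightarrow> complex) \<Rightarrow> int \<Rightarrow> int \<Rightarrow> complex" where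
  "A_pair f u s = f s (2 - u) / f 0 (2 - u) *
     ((\<Prod>t<nat s. f (int t) (3 - u)) / (\<Prod>t<nat s. f (int t + 1) (1 - u)))"

definition A_row :: "(int \<Rightarrow> int \<Rightarrow> complex) \<Rightarrow> nat \<Rightarrow> nat \<Rightarrow> nat \<Rightarrow> int \<Rightarrow> complex" where
  "A_row f n N j s =
     (\<Prod>t<nat s. f (int t) (2 - int n - int j)) / (\<Prod>t<nat s. f (int N + 1 + int t) (1 - int j))"

text \<open>For \<open>f(k, m) = E(a q\<^sup>k x\<^sup>m)\<close> the three factors are the diagonal \<open>i = j\<close> of the first product in
  \<open>A\<close>, the pairs \<open>i < j\<close> of both products (\<open>A_pair\<close>), and the quotient of the two \<open>(y; q, x)\<^sub>\<lambda>\<close>.\<close>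

definition A_lattice :: "(int \<Rightarrow> int \<Rightarrow> complex) \<Rightarrow> nat \<Rightarrow> nat \<Rightarrow> (nat \<Rightarrow> int) \<Rightarrow> complex" where
  "A_lattice f n N lam =
     (\<Prod>i\<in>{1..n}. f (2 * lam i) (2 - 2 * int i) / f 0 (2 - 2 * int i)) *
     (\<Prod>i\<in>{1..n}. \<Prod>j\<in>{i<..n}. A_pair f (int i + int j) (lam i + lam j)) *
     (\<Prod>j\<in>{1..n}. A_row f n N j (lam j))"

definition A_box_local :: "(int \<Rightarrow> int \<Rightarrow> complex) \<Rightarrow> nat \<Rightarrow> nat \<Rightarrow> int \<Rightarrow> int \<Rightarrow> complex" where
  "A_box_local f n N s k =
     f (2 * s + 2) (2 - 2 * k) / f (2 * s) (2 - 2 * k) / A_pair_step f (2 * k) (2 * s) *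
     (f s (2 - int n - k) / f (int N + 1 + s) (1 - k))"

definition A_box_ratio :: "(int \<Rightarrow> int \<Rightarrow> complex) \<Rightarrow> nat \<Rightarrow> nat \<Rightarrow> (nat \<Rightarrow> int) \<Rightarrow> nat \<Rightarrow> complex" where
  "A_box_ratio f n N lam k =
     (\<Prod>j\<in>{1..n}. A_pair_step f (int k + int j) (lam k + lam j)) * A_box_local f n N (lam k) (int k)"

lemma A_pair_step_nonzero: "(\<And>a b. f a b \<noteq> 0) \<Longrightarrow> A_pair_step f u s \<noteq> 0"
  by (simp add: A_pair_step_def)

lemma A_pair_nonzero: "(\<And>a b. f a b \<noteq> 0) \<Longrightarrow> A_pair f u s \<noteq> 0"
  by (simp add: A_pair_def)

lemma A_row_nonzero: "(\<And>a b. f a b \<noteq> 0) \<Longrightarrow> A_row f n N j s \<noteq> 0"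
  by (simp add: A_row_def)

lemma A_pair_Suc_ratio:
  assumes "\<And>a b. f a b \<noteq> 0" and "0 \<le> s"
  shows "A_pair f u (s + 1) / A_pair f u s = A_pair_step f u s"
proof -
  have "nat (s + 1) = Suc (nat s)"
    using assms(2) by simp
  then show ?thesis
    using assms by (simp add: A_pair_def A_pair_step_def field_simps)
qed

lemma A_row_Suc_ratio:
  assumes "\<And>a b. f a b \<noteq> 0" and "0 \<le> s"
  shows "A_row f n N j (s + 1) / A_row f n N j s = f s (2 - int n - int j) / f (int N + 1 + s) (1 - int j)"
proof -
  have "nat (s + 1) = Suc (nat s)"
    using assms(2) by simp
  then show ?thesis
    using assms by (simp add: A_row_def field_simps)
qed

lemma A_lattice_empty:
  assumes "\<And>a b. f a b \<noteq> 0" and "\<forall>j\<in>{1..n}. lam j = 0"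
  shows "A_lattice f n N lam = 1"
  using assms by (simp add: A_lattice_def A_pair_def A_row_def)

lemma A_pairs_add_box:
  assumes nz: "\<And>a b. f a b \<noteq> 0" and lam: "box_partition n N lam" and k: "k \<in> {1..n}"
  shows "(\<Prod>i\<in>{1..n}. \<Prod>j\<in>{i<..n}.
      A_pair f (int i + int j) ((lam(k := lam k + 1)) i + (lam(k := lam k + 1)) j)) =
    (\<Prod>i\<in>{1..n}. \<Prod>j\<in>{i<..n}. A_pair f (int i + int j) (lam i + lam j)) *
    ((\<Prod>i\<in>{1..<k}. A_pair_step f (int k + int i) (lam k + lam i)) *
     (\<Prod>j\<in>{k<..n}. A_pair_step f (int k + int j) (lam k + lam j)))"
proof -
  let ?lam' = "lam(k := lam k + 1)"
  have nonneg: "0 \<le> lam i" if "i \<in> {1..n}" for i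
    using lam that by (simp add: box_partition_def)
  have above: "A_pair f (int i + int k) (?lam' i + ?lam' k) / A_pair f (int i + int k) (lam i + lam k) =
      A_pair_step f (int k + int i) (lam k + lam i)" if "i \<in> {1..<k}" for i
    using that k nonneg[of i] nonneg[OF k] A_pair_Suc_ratio[where f = f, OF nz, of "lam i + lam k"]
    by (simp add: add_ac)
  have below: "A_pair f (int k + int j) (?lam' k + ?lam' j) / A_pair f (int k + int j) (lam k + lam j) =
      A_pair_step f (int k + int j) (lam k + lam j)" if "j \<in> {k<..n}" for j
    using that k nonneg[of j] nonneg[OF k] A_pair_Suc_ratio[where f = f, OF nz, of "lam k + lam j"]
    by (simp add: add_ac)
  have "(\<Prod>i\<in>{1..n}. \<Prod>j\<in>{i<..n}. A_pair f (int i + int j) (?lam' i + ?lam' j)) =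
      (\<Prod>i\<in>{1..n}. \<Prod>j\<in>{i<..n}. A_pair f (int i + int j) (lam i + lam j)) *
      ((\<Prod>i\<in>{1..<k}. A_pair f (int i + int k) (?lam' i + ?lam' k) /
          A_pair f (int i + int k) (lam i + lam k)) *
       (\<Prod>j\<in>{k<..n}. A_pair f (int k + int j) (?lam' k + ?lam' j) /
          A_pair f (int k + int j) (lam k + lam j)))"
    by (rule prod_pairs_agree_except[OF k]) (simp_all add: A_pair_nonzero[where f = f, OF nz])
  then show ?thesis
    using above below by simp
qed

lemma A_lattice_add_box:
  assumes nz: "\<And>a b. f a b \<noteq> 0" and lam: "box_partition n N lam" and k: "k \<in> {1..n}"
  shows "A_lattice f n N (lam(k := lam k + 1)) = A_lattice f n N lam * A_box_ratio f n N lam k"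
proof -
  let ?lam' = "lam(k := lam k + 1)"
  let ?step = "\<lambda>j. A_pair_step f (int k + int j) (lam k + lam j)"
  have "0 \<le> lam k"
    using lam k by (simp add: box_partition_def)
  have diag: "(\<Prod>i\<in>{1..n}. f (2 * ?lam' i) (2 - 2 * int i) / f 0 (2 - 2 * int i)) =
      (\<Prod>i\<in>{1..n}. f (2 * lam i) (2 - 2 * int i) / f 0 (2 - 2 * int i)) *
      (f (2 * lam k + 2) (2 - 2 * int k) / f (2 * lam k) (2 - 2 * int k))"
    using k nz by (subst prod_agree_except[of _ k]) (auto simp: distrib_left)
  have rows: "(\<Prod>j\<in>{1..n}. A_row f n N j (?lam' j)) = (\<Prod>j\<in>{1..n}. A_row f n N j (lam j)) *
      (f (lam k) (2 - int n - int k) / f (int N + 1 + lam k) (1 - int k))"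
  proof -
    have "(\<Prod>j\<in>{1..n}. A_row f n N j (?lam' j)) = (\<Prod>j\<in>{1..n}. A_row f n N j (lam j)) *
        (A_row f n N k (lam k + 1) / A_row f n N k (lam k))"
      using k A_row_nonzero[where f = f, OF nz] by (subst prod_agree_except[of _ k]) simp_all
    then show ?thesis
      by (simp only: A_row_Suc_ratio[where f = f, OF nz \<open>0 \<le> lam k\<close>])
  qed
  have steps: "(\<Prod>j\<in>{1..n}. ?step j) =
      (\<Prod>i\<in>{1..<k}. ?step i) * A_pair_step f (2 * int k) (2 * lam k) * (\<Prod>j\<in>{k<..n}. ?step j)"
    using prod_split_at[OF k, of ?step] by (simp only: mult_2)
  have regroup: "(D * d) * (P * (L * R)) * (W * w) = D * P * W * ((L * s * R) * (d / s * w))"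
    if "s \<noteq> 0" for D d P L R W w s :: complex
    using that by (simp add: field_simps)
  show ?thesis
    unfolding A_lattice_def A_box_ratio_def A_box_local_def diag A_pairs_add_box[OF nz lam k] rows steps
    by (rule regroup) (rule A_pair_step_nonzero[where f = f, OF nz])
qed

lemma A_box_local_conj:
  assumes "\<And>a b. f a b \<noteq> 0"
  shows "f (s + int N) (2 - k) * f (s + 1 + int N) (1 - k) /
      (f s (2 - k - int n) * f (s + 1) (1 - k - int n)) *
      A_box_local f n N s k = A_box_local (\<lambda>a b. f (1 - b) (1 - a)) N n (k - 1) (s + 1)"
  using assms unfolding A_box_local_def A_pair_step_def
  by (simp add: algebra_simps)

lemma A_box_ratio_conj:
  assumes nz: "\<And>a b. f a b \<noteq> 0" and lam: "box_partition n N lam"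
    and lam': "box_partition n N (lam(k := lam k + 1))" and k: "k \<in> {1..n}"
  shows "A_box_ratio f n N lam k =
    A_box_ratio (\<lambda>a b. f (1 - b) (1 - a)) N n (conj_partition n lam) (nat (lam k + 1))"
proof -
  define c where "c = nat (lam k + 1)"
  define mu where "mu = conj_partition n lam"
  note c = conj_partition_add_box[OF lam lam' k, folded c_def mu_def]
  define Phi where "Phi a b = f (lam k + a) (2 - int k - b) * f (lam k + 1 + a) (1 - int k - b)" for a b
  have Phi_nz: "Phi a b \<noteq> 0" for a b
    using nz by (simp add: Phi_def)
  have row_step: "A_pair_step f (int k + int j) (lam k + lam j) =
      inverse (Phi (lam j) (int j) / Phi (lam j) (int j - 1))" for j
    by (simp add: A_pair_step_def Phi_def algebra_simps)
  have col_step: "A_pair_step (\<lambda>a b. f (1 - b) (1 - a)) (int c + int i) (mu c + mu i) =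
      Phi (int i - 1) (mu i) / Phi (int i) (mu i)" for i
    unfolding A_pair_step_def Phi_def c(1,3) by (simp add: algebra_simps)
  define R where "R = (\<Prod>j\<in>{1..n}. Phi (lam j) (int j) / Phi (lam j) (int j - 1))"
  define C where "C = (\<Prod>i\<in>{1..N}. Phi (int i - 1) (mu i) / Phi (int i) (mu i))"
  have "R * C = Phi 0 (int n) / Phi (int N) 0"
    unfolding R_def C_def mu_def by (rule box_partition_boundary_prod[OF lam Phi_nz])
  moreover have "R \<noteq> 0"
    using Phi_nz by (simp add: R_def)
  ultimately have inv_R: "inverse R = C * (Phi (int N) 0 / Phi 0 (int n))"
    using Phi_nz by (auto simp: field_simps)
  have cols: "(\<Prod>i\<in>{1..N}. A_pair_step (\<lambda>a b. f (1 - b) (1 - a)) (int c + int i) (mu c + mu i)) = C"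
    unfolding C_def by (rule prod.cong[OF refl col_step])
  have local: "Phi (int N) 0 / Phi 0 (int n) * A_box_local f n N (lam k) (int k) =
      A_box_local (\<lambda>a b. f (1 - b) (1 - a)) N n (int k - 1) (lam k + 1)"
    using A_box_local_conj[where f = f and s = "lam k" and k = "int k", OF nz] by (simp add: Phi_def)
  have "A_box_ratio f n N lam k = inverse R * A_box_local f n N (lam k) (int k)"
    unfolding A_box_ratio_def row_step R_def prod_inversef[symmetric] by (simp add: comp_def)
  also have "\<dots> = C * A_box_local (\<lambda>a b. f (1 - b) (1 - a)) N n (int k - 1) (lam k + 1)"
    unfolding inv_R local[symmetric] by simp
  also have "\<dots> = A_box_ratio (\<lambda>a b. f (1 - b) (1 - a)) N n mu c"
    unfolding A_box_ratio_def cols unfolding c(1,3) ..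
  finally show ?thesis
    by (simp add: c_def mu_def)
qed

theorem A_lattice_conj:
  assumes nz: "\<And>a b. f a b \<noteq> 0" and "box_partition n N lam"
  shows "A_lattice f n N lam = A_lattice (\<lambda>a b. f (1 - b) (1 - a)) N n (conj_partition n lam)"
  using assms(2)
proof (induction rule: box_partition_induct)
  case (empty lam)
  then show ?case
    using nz by (simp add: A_lattice_empty conj_partition_empty)
next
  case (add_box lam k)
  define c where "c = nat (lam k + 1)"
  define mu where "mu = conj_partition n lam"
  note c = conj_partition_add_box[OF add_box.hyps(1-3), folded c_def mu_def]
  have "A_lattice f n N (lam(k := lam k + 1)) = A_lattice f n N lam * A_box_ratio f n N lam k"
    by (rule A_lattice_add_box[where f = f, OF nz add_box.hyps(1,3)])
  also have "\<dots> = A_lattice (\<lambda>a b. f (1 - b) (1 - a)) N n mu *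
      A_box_ratio (\<lambda>a b. f (1 - b) (1 - a)) N n mu c"
    unfolding add_box.IH A_box_ratio_conj[where f = f, OF nz add_box.hyps(1-3)] c_def mu_def ..
  also have "\<dots> = A_lattice (\<lambda>a b. f (1 - b) (1 - a)) N n (mu(c := mu c + 1))"
    using nz c(2) box_partition_conj_partition[OF add_box.hyps(1)]
    by (intro A_lattice_add_box[symmetric]) (simp_all add: mu_def)
  also have "mu(c := mu c + 1) = conj_partition n (lam(k := lam k + 1))"
    using c(3,4) by simp
  finally show ?case .
qed


section \<open>The lattice form of \<open>B\<close>\<close>

text \<open>The functional equation \<open>E(1/y) = -E(y)/y\<close> at \<open>y = Q\<^sup>a X\<^sup>b\<close>.\<close>

definition lattice_reflection :: "(int \<Rightarrow> int \<Rightarrow> complex) \<Rightarrow> complex \<Rightarrow> complex \<Rightarrow> bool" where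
  "lattice_reflection f Q X \<longleftrightarrow>
     (\<forall>a b. (a, b) \<noteq> (0, 0) \<longrightarrow> f (- a) (- b) = - (Q powi (- a) * X powi (- b)) * f a b)"

definition B_pair_step :: "(int \<Rightarrow> int \<Rightarrow> complex) \<Rightarrow> int \<Rightarrow> int \<Rightarrow> complex" where
  "B_pair_step f u s = f (s + 1) u * f s (u + 1) / (f s u * f (s + 1) (u - 1))"

definition B_pair :: "(int \<Rightarrow> int \<Rightarrow> complex) \<Rightarrow> int \<Rightarrow> int \<Rightarrow> complex" where
  "B_pair f u s = f s u / f 0 u *
     ((\<Prod>t<nat s. f (int t) (u + 1)) / (\<Prod>t<nat s. f (int t + 1) (u - 1)))"

definition B_row :: "(int \<Rightarrow> int \<Rightarrow> complex) \<Rightarrow> nat \<Rightarrow> nat \<Rightarrow> nat \<Rightarrow> int \<Rightarrow> complex" where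
  "B_row f n N j s =
     (\<Prod>t<nat s. f (int t - int N) (1 - int j)) / (\<Prod>t<nat s. f (1 + int t) (int n - int j))"

definition B_lattice ::
    "(int \<Rightarrow> int \<Rightarrow> complex) \<Rightarrow> complex \<Rightarrow> complex \<Rightarrow> nat \<Rightarrow> nat \<Rightarrow> (nat \<Rightarrow> int) \<Rightarrow> complex" where
  "B_lattice f Q X n N lam =
     (\<Prod>i\<in>{1..n}. Q powi lam i * X powi (2 * (int i - 1) * lam i)) *
     (\<Prod>i\<in>{1..n}. \<Prod>j\<in>{i<..n}. B_pair f (int j - int i) (lam i - lam j)) *
     (\<Prod>j\<in>{1..n}. B_row f n N j (lam j))"

definition B_box_local :: "(int \<Rightarrow> int \<Rightarrow> complex) \<Rightarrow> complex \<Rightarrow> nat \<Rightarrow> nat \<Rightarrow> int \<Rightarrow> int \<Rightarrow> complex" where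
  "B_box_local f Q n N s k = Q / B_pair_step f 0 0 * (f (s - int N) (1 - k) / f (1 + s) (int n - k))"

definition B_box_ratio ::
    "(int \<Rightarrow> int \<Rightarrow> complex) \<Rightarrow> complex \<Rightarrow> nat \<Rightarrow> nat \<Rightarrow> (nat \<Rightarrow> int) \<Rightarrow> nat \<Rightarrow> complex" where
  "B_box_ratio f Q n N lam k =
     (\<Prod>j\<in>{1..n}. B_pair_step f (int j - int k) (lam k - lam j)) * B_box_local f Q n N (lam k) (int k)"

lemma B_pair_step_nonzero: "(\<And>a b. f a b \<noteq> 0) \<Longrightarrow> B_pair_step f u s \<noteq> 0"
  by (simp add: B_pair_step_def)

lemma B_pair_nonzero: "(\<And>a b. f a b \<noteq> 0) \<Longrightarrow> B_pair f u s \<noteq> 0"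
  by (simp add: B_pair_def)

lemma B_row_nonzero: "(\<And>a b. f a b \<noteq> 0) \<Longrightarrow> B_row f n N j s \<noteq> 0"
  by (simp add: B_row_def)

lemma B_pair_Suc_ratio:
  assumes "\<And>a b. f a b \<noteq> 0" and "0 \<le> s"
  shows "B_pair f u (s + 1) / B_pair f u s = B_pair_step f u s"
proof -
  have "nat (s + 1) = Suc (nat s)"
    using assms(2) by simp
  then show ?thesis
    using assms by (simp add: B_pair_def B_pair_step_def field_simps)
qed

lemma B_row_Suc_ratio:
  assumes "\<And>a b. f a b \<noteq> 0" and "0 \<le> s"
  shows "B_row f n N j (s + 1) / B_row f n N j s = f (s - int N) (1 - int j) / f (1 + s) (int n - int j)"
proof -
  have "nat (s + 1) = Suc (nat s)"
    using assms(2) by simp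
  then show ?thesis
    using assms by (simp add: B_row_def field_simps)
qed

lemma B_lattice_empty:
  assumes "\<And>a b. f a b \<noteq> 0" and "\<forall>j\<in>{1..n}. lam j = 0"
  shows "B_lattice f Q X n N lam = 1"
  using assms by (simp add: B_lattice_def B_pair_def B_row_def)

lemma lattice_reflectionD:
  assumes "lattice_reflection f Q X" and "(a, b) \<noteq> (0, 0)"
  shows "f (- a) (- b) = - (Q powi (- a) * X powi (- b)) * f a b"
  using assms by (simp add: lattice_reflection_def)

lemma lattice_reflection_conj:
  assumes "lattice_reflection f Q X"
  shows "lattice_reflection (\<lambda>a b. f (- b) (- a)) (inverse X) (inverse Q)"
  unfolding lattice_reflection_def
proof (intro allI impI)
  fix a b :: int assume "(a, b) \<noteq> (0, 0)"
  then have "f (- (- b)) (- (- a)) = - (Q powi (- (- b)) * X powi (- (- a))) * f (- b) (- a)"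
    by (intro lattice_reflectionD[OF assms]) auto
  then show "f (- (- b)) (- (- a)) = - (inverse X powi (- a) * inverse Q powi (- b)) * f (- b) (- a)"
    by (simp add: power_int_inverse power_int_minus mult.commute)
qed

lemma B_pair_step_reflect:
  assumes Q: "Q \<noteq> 0" and X: "X \<noteq> 0" and nz: "\<And>a b. f a b \<noteq> 0" and refl: "lattice_reflection f Q X"
    and "1 \<le> u" and "0 \<le> s"
  shows "inverse (B_pair_step f u s) = X powi (-2) * B_pair_step f (- u) (- s - 1)"
proof -
  have r1: "f (- s) (- u) = - (Q powi (- s) * X powi (- u)) * f s u"
    and r2: "f (- (s + 1)) (- (u - 1)) = - (Q powi (- (s + 1)) * X powi (- (u - 1))) * f (s + 1) (u - 1)"
    and r3: "f (- (s + 1)) (- u) = - (Q powi (- (s + 1)) * X powi (- u)) * f (s + 1) u"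
    and r4: "f (- s) (- (u + 1)) = - (Q powi (- s) * X powi (- (u + 1))) * f s (u + 1)"
    using assms(5,6) by (intro lattice_reflectionD[OF refl]; simp)+
  have "B_pair_step f (- u) (- s - 1) =
      f (- s) (- u) * f (- (s + 1)) (- (u - 1)) / (f (- (s + 1)) (- u) * f (- s) (- (u + 1)))"
  proof -
    have "- s - 1 = - (s + 1)" "- (s + 1) + 1 = - s" "- u + 1 = - (u - 1)" "- u - 1 = - (u + 1)"
      by simp_all
    then show ?thesis
      unfolding B_pair_step_def by (simp only:)
  qed
  also have "\<dots> = X powi 2 * inverse (B_pair_step f u s)"
    unfolding r1 r2 r3 r4 B_pair_step_def using Q X nz
    by (simp add: power_int_minus power_int_add power_int_diff power2_eq_square field_simps)
  finally show ?thesis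
    using X by (simp add: power_int_minus)
qed

lemma B_pair_pred_ratio:
  assumes Q: "Q \<noteq> 0" and X: "X \<noteq> 0" and nz: "\<And>a b. f a b \<noteq> 0" and refl: "lattice_reflection f Q X"
    and u: "1 \<le> u" and d: "1 \<le> d"
  shows "B_pair f u (d - 1) / B_pair f u d = X powi (-2) * B_pair_step f (- u) (- d)"
proof -
  have "B_pair f u (d - 1 + 1) / B_pair f u (d - 1) = B_pair_step f u (d - 1)"
    using d by (intro B_pair_Suc_ratio[where f = f, OF nz]) simp
  then have "B_pair f u (d - 1) / B_pair f u d = inverse (B_pair_step f u (d - 1))"
    by (simp add: B_pair_nonzero[where f = f, OF nz] field_simps)
  also have "\<dots> = X powi (-2) * B_pair_step f (- u) (- d)"
    using B_pair_step_reflect[OF Q X nz refl u, of "d - 1"] d by simp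
  finally show ?thesis .
qed

lemma B_pairs_add_box:
  assumes Q: "Q \<noteq> 0" and X: "X \<noteq> 0" and nz: "\<And>a b. f a b \<noteq> 0" and refl: "lattice_reflection f Q X"
    and lam: "box_partition n N lam" and lam': "box_partition n N (lam(k := lam k + 1))" and k: "k \<in> {1..n}"
  shows "(\<Prod>i\<in>{1..n}. \<Prod>j\<in>{i<..n}.
      B_pair f (int j - int i) ((lam(k := lam k + 1)) i - (lam(k := lam k + 1)) j)) =
    (\<Prod>i\<in>{1..n}. \<Prod>j\<in>{i<..n}. B_pair f (int j - int i) (lam i - lam j)) *
    ((X powi (-2)) ^ (k - 1) * (\<Prod>i\<in>{1..<k}. B_pair_step f (int i - int k) (lam k - lam i)) *
     (\<Prod>j\<in>{k<..n}. B_pair_step f (int j - int k) (lam k - lam j)))"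
proof -
  let ?lam' = "lam(k := lam k + 1)"
  \<comment> \<open>above the new box the difference \<open>\<lambda>\<^sub>i - \<lambda>\<^sub>k\<close> decreases, so reflection is needed\<close>
  have above: "B_pair f (int k - int i) (?lam' i - ?lam' k) / B_pair f (int k - int i) (lam i - lam k) =
      X powi (-2) * B_pair_step f (int i - int k) (lam k - lam i)" if i: "i \<in> {1..<k}" for i
  proof -
    have "1 \<le> lam i - lam k"
      using box_partition_add_box_above[OF lam' k i] by simp
    then show ?thesis
      using i B_pair_pred_ratio[OF Q X nz refl, of "int k - int i" "lam i - lam k"]
      by (simp add: diff_diff_eq)
  qed
  have below: "B_pair f (int j - int k) (?lam' k - ?lam' j) / B_pair f (int j - int k) (lam k - lam j) =
      B_pair_step f (int j - int k) (lam k - lam j)" if j: "j \<in> {k<..n}" for j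
  proof -
    have "0 \<le> lam k - lam j"
      using lam j k unfolding box_partition_def by auto
    from B_pair_Suc_ratio[where f = f, OF nz this] show ?thesis
      using j by (simp add: algebra_simps)
  qed
  have "(\<Prod>i\<in>{1..n}. \<Prod>j\<in>{i<..n}. B_pair f (int j - int i) (?lam' i - ?lam' j)) =
      (\<Prod>i\<in>{1..n}. \<Prod>j\<in>{i<..n}. B_pair f (int j - int i) (lam i - lam j)) *
      ((\<Prod>i\<in>{1..<k}. B_pair f (int k - int i) (?lam' i - ?lam' k) /
          B_pair f (int k - int i) (lam i - lam k)) *
       (\<Prod>j\<in>{k<..n}. B_pair f (int j - int k) (?lam' k - ?lam' j) /
          B_pair f (int j - int k) (lam k - lam j)))"
    by (rule prod_pairs_agree_except[OF k]) (simp_all add: B_pair_nonzero[where f = f, OF nz])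
  then show ?thesis
    using above below by (simp add: prod.distrib)
qed

lemma B_lattice_add_box:
  assumes Q: "Q \<noteq> 0" and X: "X \<noteq> 0" and nz: "\<And>a b. f a b \<noteq> 0" and refl: "lattice_reflection f Q X"
    and lam: "box_partition n N lam" and lam': "box_partition n N (lam(k := lam k + 1))" and k: "k \<in> {1..n}"
  shows "B_lattice f Q X n N (lam(k := lam k + 1)) = B_lattice f Q X n N lam * B_box_ratio f Q n N lam k"
proof -
  let ?lam' = "lam(k := lam k + 1)"
  let ?step = "\<lambda>j. B_pair_step f (int j - int k) (lam k - lam j)"
  have "0 \<le> lam k"
    using lam k by (simp add: box_partition_def)
  have diag: "(\<Prod>i\<in>{1..n}. Q powi ?lam' i * X powi (2 * (int i - 1) * ?lam' i)) =
      (\<Prod>i\<in>{1..n}. Q powi lam i * X powi (2 * (int i - 1) * lam i)) * (Q * X powi (2 * (int k - 1)))"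
  proof -
    have "Q powi (lam k + 1) * X powi (2 * (int k - 1) * (lam k + 1)) =
        Q powi lam k * X powi (2 * (int k - 1) * lam k) * (Q * X powi (2 * (int k - 1)))"
      using Q X by (simp add: distrib_left power_int_add)
    then show ?thesis
      using k Q X prod_agree_except[of "{1..n}" k "\<lambda>i. Q powi ?lam' i * X powi (2 * (int i - 1) * ?lam' i)"
          "\<lambda>i. Q powi lam i * X powi (2 * (int i - 1) * lam i)"]
      by simp
  qed
  have rows: "(\<Prod>j\<in>{1..n}. B_row f n N j (?lam' j)) = (\<Prod>j\<in>{1..n}. B_row f n N j (lam j)) *
      (f (lam k - int N) (1 - int k) / f (1 + lam k) (int n - int k))"
  proof -
    have "(\<Prod>j\<in>{1..n}. B_row f n N j (?lam' j)) = (\<Prod>j\<in>{1..n}. B_row f n N j (lam j)) *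
        (B_row f n N k (lam k + 1) / B_row f n N k (lam k))"
      using k B_row_nonzero[where f = f, OF nz] by (subst prod_agree_except[of _ k]) simp_all
    then show ?thesis
      by (simp only: B_row_Suc_ratio[where f = f, OF nz \<open>0 \<le> lam k\<close>])
  qed
  have steps: "(\<Prod>j\<in>{1..n}. ?step j) = (\<Prod>i\<in>{1..<k}. ?step i) * B_pair_step f 0 0 * (\<Prod>j\<in>{k<..n}. ?step j)"
    using prod_split_at[OF k, of ?step] by simp
  have powers: "X powi (2 * (int k - 1)) * (X powi (-2)) ^ (k - 1) = 1"
  proof -
    obtain m where m: "k = Suc m"
      using k by (cases k) auto
    have "X powi (2 * int m) = (X ^ 2) ^ m"
      by (metis of_nat_mult of_nat_numeral power_int_of_nat power_mult)
    moreover have "(X powi (-2)) ^ m = inverse ((X ^ 2) ^ m)"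
      by (simp add: power_int_minus power_inverse)
    ultimately show ?thesis
      using X by (simp add: m)
  qed
  have regroup: "(D * (Q * x)) * (P * (y * L * R)) * (W * w) = D * P * W * ((L * s * R) * (Q / s * w))"
    if "s \<noteq> 0" "x * y = 1" for D x P y L R W w s :: complex
    using that by (simp add: field_simps)
  show ?thesis
    unfolding B_lattice_def B_box_ratio_def B_box_local_def diag rows steps
      B_pairs_add_box[OF Q X nz refl lam lam' k]
    by (rule regroup[OF B_pair_step_nonzero[where f = f, OF nz] powers])
qed

lemma B_box_local_conj:
  assumes Q: "Q \<noteq> 0" and X: "X \<noteq> 0" and nz: "\<And>a b. f a b \<noteq> 0" and refl: "lattice_reflection f Q X"
  shows "f s (int n - k + 1) * f (s + 1) (int n - k) / (f (s - int N) (1 - k) * f (s + 1 - int N) (- k)) *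
      B_box_local f Q n N s k = B_box_local (\<lambda>a b. f (- b) (- a)) (inverse X) N n (k - 1) (s + 1)"
proof -
  have "f (- 0) (- 1) = - (Q powi (- 0) * X powi (- 1)) * f 0 1"
    and "f (- 1) (- 0) = - (Q powi (- 1) * X powi (- 0)) * f 1 0"
    by (intro lattice_reflectionD[OF refl]; simp)+
  then have "f 0 (- 1) = - inverse X * f 0 1" and "f (- 1) 0 = - inverse Q * f 1 0"
    by (simp_all add: power_int_minus)
  then show ?thesis
    using Q X nz unfolding B_box_local_def B_pair_step_def
    by (simp add: algebra_simps) (simp add: field_simps)
qed

lemma B_box_ratio_conj:
  assumes Q: "Q \<noteq> 0" and X: "X \<noteq> 0" and nz: "\<And>a b. f a b \<noteq> 0" and refl: "lattice_reflection f Q X"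
    and lam: "box_partition n N lam" and lam': "box_partition n N (lam(k := lam k + 1))" and k: "k \<in> {1..n}"
  shows "B_box_ratio f Q n N lam k =
    B_box_ratio (\<lambda>a b. f (- b) (- a)) (inverse X) N n (conj_partition n lam) (nat (lam k + 1))"
proof -
  define c where "c = nat (lam k + 1)"
  define mu where "mu = conj_partition n lam"
  note c = conj_partition_add_box[OF lam lam' k, folded c_def mu_def]
  define Phi where "Phi a b = f (lam k - a) (b - int k + 1) * f (lam k + 1 - a) (b - int k)" for a b
  have Phi_nz: "Phi a b \<noteq> 0" for a b
    using nz by (simp add: Phi_def)
  have row_step: "B_pair_step f (int j - int k) (lam k - lam j) =
      Phi (lam j) (int j) / Phi (lam j) (int j - 1)" for j
    by (simp add: B_pair_step_def Phi_def algebra_simps)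
  have col_step: "B_pair_step (\<lambda>a b. f (- b) (- a)) (int i - int c) (mu c - mu i) =
      inverse (Phi (int i - 1) (mu i) / Phi (int i) (mu i))" for i
    unfolding B_pair_step_def Phi_def c(1,3) by (simp add: algebra_simps)
  define R where "R = (\<Prod>j\<in>{1..n}. Phi (lam j) (int j) / Phi (lam j) (int j - 1))"
  define C where "C = (\<Prod>i\<in>{1..N}. Phi (int i - 1) (mu i) / Phi (int i) (mu i))"
  have "R * C = Phi 0 (int n) / Phi (int N) 0"
    unfolding R_def C_def mu_def by (rule box_partition_boundary_prod[OF lam Phi_nz])
  moreover have "C \<noteq> 0"
    using Phi_nz by (simp add: C_def)
  ultimately have R: "R = inverse C * (Phi 0 (int n) / Phi (int N) 0)"
    using Phi_nz by (auto simp: field_simps)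
  have cols: "(\<Prod>i\<in>{1..N}. B_pair_step (\<lambda>a b. f (- b) (- a)) (int i - int c) (mu c - mu i)) = inverse C"
    unfolding C_def col_step prod_inversef[symmetric] by (simp add: comp_def)
  have local: "Phi 0 (int n) / Phi (int N) 0 * B_box_local f Q n N (lam k) (int k) =
      B_box_local (\<lambda>a b. f (- b) (- a)) (inverse X) N n (int k - 1) (lam k + 1)"
    using B_box_local_conj[where f = f and s = "lam k" and k = "int k", OF Q X nz refl]
    by (simp add: Phi_def)
  have "B_box_ratio f Q n N lam k = R * B_box_local f Q n N (lam k) (int k)"
    unfolding B_box_ratio_def row_step R_def ..
  also have "\<dots> = inverse C * B_box_local (\<lambda>a b. f (- b) (- a)) (inverse X) N n (int k - 1) (lam k + 1)"
    unfolding R local[symmetric] by simp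
  also have "\<dots> = B_box_ratio (\<lambda>a b. f (- b) (- a)) (inverse X) N n mu c"
    unfolding B_box_ratio_def cols unfolding c(1,3) ..
  finally show ?thesis
    by (simp add: c_def mu_def)
qed

theorem B_lattice_conj:
  assumes Q: "Q \<noteq> 0" and X: "X \<noteq> 0" and nz: "\<And>a b. f a b \<noteq> 0" and refl: "lattice_reflection f Q X"
    and "box_partition n N lam"
  shows "B_lattice f Q X n N lam =
    B_lattice (\<lambda>a b. f (- b) (- a)) (inverse X) (inverse Q) N n (conj_partition n lam)"
  using assms(5)
proof (induction rule: box_partition_induct)
  case (empty lam)
  then show ?case
    using nz by (simp add: B_lattice_empty conj_partition_empty)
next
  case (add_box lam k)
  define c where "c = nat (lam k + 1)"
  define mu where "mu = conj_partition n lam"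
  note c = conj_partition_add_box[OF add_box.hyps(1-3), folded c_def mu_def]
  have mu': "mu(c := mu c + 1) = conj_partition n (lam(k := lam k + 1))"
    using c(3,4) by simp
  have "B_lattice f Q X n N (lam(k := lam k + 1)) = B_lattice f Q X n N lam * B_box_ratio f Q n N lam k"
    by (rule B_lattice_add_box[OF Q X nz refl add_box.hyps(1-3)])
  also have "\<dots> = B_lattice (\<lambda>a b. f (- b) (- a)) (inverse X) (inverse Q) N n mu *
      B_box_ratio (\<lambda>a b. f (- b) (- a)) (inverse X) N n mu c"
    unfolding add_box.IH B_box_ratio_conj[OF Q X nz refl add_box.hyps(1-3)] c_def mu_def ..
  also have "\<dots> = B_lattice (\<lambda>a b. f (- b) (- a)) (inverse X) (inverse Q) N n (mu(c := mu c + 1))"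
    using Q X nz c(2) lattice_reflection_conj[OF refl] box_partition_conj_partition[OF add_box.hyps(1)]
      box_partition_conj_partition[OF add_box.hyps(2)]
    by (intro B_lattice_add_box[symmetric]) (simp_all add: mu_def mu'[unfolded mu_def])
  finally show ?case
    unfolding mu' .
qed


section \<open>From \<open>A\<close> and \<open>B\<close> to their lattice forms\<close>

definition E_lattice :: "complex \<Rightarrow> complex \<Rightarrow> complex \<Rightarrow> complex \<Rightarrow> int \<Rightarrow> int \<Rightarrow> complex" where
  "E_lattice p c q x k m = E p (c * q powi k * x powi m)"

text \<open>Since \<open>E p 1 = 0\<close>, the lattice function of \<open>B\<close> vanishes at the origin. The origin never
  occurs in \<open>B\<close>, so the value there is replaced by \<open>1\<close>, which makes the function nonvanishing.\<close>

definition E_lattice0 :: "complex \<Rightarrow> complex \<Rightarrow> complex \<Rightarrow> int \<Rightarrow> int \<Rightarrow> complex" where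
  "E_lattice0 p q x k m = (if (k, m) = (0, 0) then 1 else E p (q powi k * x powi m))"

lemma qpoch_lattice:
  assumes "q \<noteq> 0" and "0 \<le> s"
  shows "qpoch p (c * q powi k * x powi m) q s = (\<Prod>t<nat s. E_lattice p c q x (k + int t) m)"
  using assms by (simp add: qpoch_def E_lattice_def power_int_add mult_ac)

lemma A_pair_eq_qpoch:
  assumes "q \<noteq> 0" and "0 \<le> s"
  shows "E p (a * x powi (2 - u) * q powi s) / E p (a * x powi (2 - u)) *
      (qpoch p (a * x powi (3 - u)) q s / qpoch p (a * q * x powi (1 - u)) q s) =
    A_pair (E_lattice p a q x) u s"
proof -
  have "a * x powi (3 - u) = a * q powi 0 * x powi (3 - u)"
    and "a * q * x powi (1 - u) = a * q powi 1 * x powi (1 - u)"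
    by simp_all
  then show ?thesis
    by (simp only: qpoch_lattice[OF assms]) (simp add: A_pair_def E_lattice_def mult_ac add_ac)
qed

lemma A_row_eq_qpoch:
  assumes "q \<noteq> 0" and "x \<noteq> 0" and "0 \<le> s"
  shows "qpoch p (a * x powi (1 - int n) * x powi (1 - int j)) q s /
      qpoch p (a * q ^ (N + 1) * x powi (1 - int j)) q s = A_row (E_lattice p a q x) n N j s"
proof -
  have "x powi (2 - int n - int j) = x powi (1 - int n) * x powi (1 - int j)"
    using assms(2) power_int_add[of x "1 - int n" "1 - int j"] by (simp add: diff_diff_eq add_diff_eq)
  then have "a * x powi (1 - int n) * x powi (1 - int j) = a * q powi 0 * x powi (2 - int n - int j)"
    by (simp add: mult.assoc)
  moreover have "a * q ^ (N + 1) * x powi (1 - int j) = a * q powi (int N + 1) * x powi (1 - int j)"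
    using power_int_of_nat[of q "N + 1"] by (simp add: add.commute)
  ultimately show ?thesis
    by (simp only: qpoch_lattice[OF assms(1,3)]) (simp add: A_row_def add_ac)
qed

lemma A_eq_A_lattice:
  assumes q: "q \<noteq> 0" and x: "x \<noteq> 0" and lam: "box_partition n N lam" and len: "length l = n"
    and l: "\<And>i. i \<in> {1..n} \<Longrightarrow> l ! (i - 1) = lam i"
  shows "A p a q x n N l = A_lattice (E_lattice p a q x) n N lam"
proof -
  have nonneg: "0 \<le> lam i" if "i \<in> {1..n}" for i
    using lam that by (simp add: box_partition_def)
  have diag: "E p (a * x powi (2 - int i - int i) * q powi (lam i + lam i)) /
      E p (a * x powi (2 - int i - int i)) =
      E_lattice p a q x (2 * lam i) (2 - 2 * int i) / E_lattice p a q x 0 (2 - 2 * int i)" for i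
    by (simp add: E_lattice_def mult_ac mult_2)
  have pairs: "(\<Prod>i\<in>{1..n}. \<Prod>j\<in>{i<..n}. E p (a * x powi (2 - int i - int j) * q powi (lam i + lam j)) /
        E p (a * x powi (2 - int i - int j))) *
      (\<Prod>i\<in>{1..n}. \<Prod>j\<in>{i<..n}. qpoch p (a * x powi (3 - int i - int j)) q (lam i + lam j) /
        qpoch p (a * q * x powi (1 - int i - int j)) q (lam i + lam j)) =
      (\<Prod>i\<in>{1..n}. \<Prod>j\<in>{i<..n}. A_pair (E_lattice p a q x) (int i + int j) (lam i + lam j))"
    unfolding prod.distrib[symmetric]
  proof (intro prod.cong refl)
    fix i j assume "i \<in> {1..n}" and "j \<in> {i<..n}"
    then have "0 \<le> lam i + lam j"
      using nonneg by force
    from A_pair_eq_qpoch[OF q this, of p a x "int i + int j"]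
    show "E p (a * x powi (2 - int i - int j) * q powi (lam i + lam j)) / E p (a * x powi (2 - int i - int j)) *
        (qpoch p (a * x powi (3 - int i - int j)) q (lam i + lam j) /
         qpoch p (a * q * x powi (1 - int i - int j)) q (lam i + lam j)) =
        A_pair (E_lattice p a q x) (int i + int j) (lam i + lam j)"
      by (simp add: diff_diff_eq)
  qed
  have rows: "qpochL p (a * x powi (1 - int n)) q x l / qpochL p (a * q ^ (N + 1)) q x l =
      (\<Prod>j\<in>{1..n}. A_row (E_lattice p a q x) n N j (lam j))"
    unfolding qpochL_def len prod_dividef[symmetric]
  proof (rule prod.cong[OF refl])
    fix j assume j: "j \<in> {1..n}"
    show "qpoch p (a * x powi (1 - int n) * x powi (1 - int j)) q (l ! (j - 1)) /
        qpoch p (a * q ^ (N + 1) * x powi (1 - int j)) q (l ! (j - 1)) =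
        A_row (E_lattice p a q x) n N j (lam j)"
      unfolding l[OF j] by (rule A_row_eq_qpoch[OF q x nonneg[OF j]])
  qed
  have "A p a q x n N l =
      (\<Prod>i\<in>{1..n}. \<Prod>j\<in>{i..n}. E p (a * x powi (2 - int i - int j) * q powi (lam i + lam j)) /
        E p (a * x powi (2 - int i - int j))) *
      (\<Prod>i\<in>{1..n}. \<Prod>j\<in>{i<..n}. qpoch p (a * x powi (3 - int i - int j)) q (lam i + lam j) /
        qpoch p (a * q * x powi (1 - int i - int j)) q (lam i + lam j)) *
      (\<Prod>j\<in>{1..n}. A_row (E_lattice p a q x) n N j (lam j))"
    unfolding A_def Let_def rows[symmetric] using l
    by (intro arg_cong2[where f = "(*)"] refl prod.cong) auto
  then show ?thesis
    unfolding prod_upper_triangle_split A_lattice_def diag pairs[symmetric] by (simp only: mult.assoc)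
qed

lemma E_lattice0_eq: "(k, m) \<noteq> (0, 0) \<Longrightarrow> E_lattice0 p q x k m = E p (q powi k * x powi m)"
  unfolding E_lattice0_def by auto

lemma qpoch_lattice0:
  assumes "q \<noteq> 0" and "0 \<le> s" and "\<And>t. t < nat s \<Longrightarrow> (k + int t, m) \<noteq> (0, 0)"
  shows "qpoch p (q powi k * x powi m) q s = (\<Prod>t<nat s. E_lattice0 p q x (k + int t) m)"
proof -
  have "qpoch p (q powi k * x powi m) q s = (\<Prod>t<nat s. E_lattice p 1 q x (k + int t) m)"
    using qpoch_lattice[OF assms(1,2), of p 1 k x m] by simp
  also have "\<dots> = (\<Prod>t<nat s. E_lattice0 p q x (k + int t) m)"
    using assms(3) by (intro prod.cong refl) (simp add: E_lattice_def E_lattice0_eq)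
  finally show ?thesis .
qed

lemma B_pair_eq_qpoch:
  assumes q: "q \<noteq> 0" and u: "0 < u" and s: "0 \<le> s"
  shows "E p (x powi u * q powi s) / E p (x powi u) *
      (qpoch p (x powi (u + 1)) q s / qpoch p (q * x powi (u - 1)) q s) = B_pair (E_lattice0 p q x) u s"
proof -
  have "qpoch p (x powi (u + 1)) q s = (\<Prod>t<nat s. E_lattice0 p q x (int t) (u + 1))"
    using qpoch_lattice0[OF q s, of 0 "u + 1" p x] u by simp
  moreover have "qpoch p (q * x powi (u - 1)) q s = (\<Prod>t<nat s. E_lattice0 p q x (int t + 1) (u - 1))"
    using qpoch_lattice0[OF q s, of 1 "u - 1" p x] by (simp add: add.commute)
  moreover have "E p (x powi u * q powi s) = E_lattice0 p q x s u"
    and "E p (x powi u) = E_lattice0 p q x 0 u"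
    using u by (simp_all add: E_lattice0_eq mult.commute)
  ultimately show ?thesis
    by (simp add: B_pair_def)
qed

lemma B_row_eq_qpoch:
  assumes q: "q \<noteq> 0" and x: "x \<noteq> 0" and j: "j \<in> {1..n}" and s: "0 \<le> s" "s \<le> int N"
  shows "qpoch p (q powi (- int N) * x powi (1 - int j)) q s /
      qpoch p (q * x ^ (n - 1) * x powi (1 - int j)) q s = B_row (E_lattice0 p q x) n N j s"
proof -
  have "x ^ (n - 1) = x powi (int n - 1)"
    using j power_int_of_nat[of x "n - 1"] by (simp add: of_nat_diff)
  then have "x ^ (n - 1) * x powi (1 - int j) = x powi (int n - int j)"
    using x power_int_add[of x "int n - 1" "1 - int j"] by simp
  then have "qpoch p (q * x ^ (n - 1) * x powi (1 - int j)) q s =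
      (\<Prod>t<nat s. E_lattice0 p q x (1 + int t) (int n - int j))"
    using qpoch_lattice0[OF q s(1), of 1 "int n - int j" p x] by (simp add: mult.assoc)
  moreover have "(- int N + int t, 1 - int j) \<noteq> (0, 0)" if "t < nat s" for t
    using that s by auto
  then have "qpoch p (q powi (- int N) * x powi (1 - int j)) q s =
      (\<Prod>t<nat s. E_lattice0 p q x (int t - int N) (1 - int j))"
    using qpoch_lattice0[OF q s(1), of "- int N" "1 - int j" p x] by simp
  ultimately show ?thesis
    by (simp add: B_row_def)
qed

lemma B_eq_B_lattice:
  assumes q: "q \<noteq> 0" and x: "x \<noteq> 0" and lam: "box_partition n N lam" and len: "length l = n"
    and l: "\<And>i. i \<in> {1..n} \<Longrightarrow> l ! (i - 1) = lam i"
  shows "B p q x n N l = B_lattice (E_lattice0 p q x) q x n N lam"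
proof -
  have pair: "E p (x powi (int j - int i) * q powi (lam i - lam j)) / E p (x powi (int j - int i)) *
      (qpoch p (x powi (int j - int i + 1)) q (lam i - lam j) /
       qpoch p (q * x powi (int j - int i - 1)) q (lam i - lam j)) =
      B_pair (E_lattice0 p q x) (int j - int i) (lam i - lam j)" if "i \<in> {1..n}" and "j \<in> {i<..n}" for i j
  proof (rule B_pair_eq_qpoch[OF q])
    show "0 \<le> lam i - lam j"
      using lam that unfolding box_partition_def by auto
  qed (use that in simp)
  have rows: "qpochL p (q powi (- int N)) q x l / qpochL p (q * x ^ (n - 1)) q x l =
      (\<Prod>j\<in>{1..n}. B_row (E_lattice0 p q x) n N j (lam j))"
    unfolding qpochL_def len prod_dividef[symmetric]
  proof (rule prod.cong[OF refl])
    fix j assume j: "j \<in> {1..n}"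
    then have "0 \<le> lam j" "lam j \<le> int N"
      using lam by (simp_all add: box_partition_def)
    then show "qpoch p (q powi (- int N) * x powi (1 - int j)) q (l ! (j - 1)) /
        qpoch p (q * x ^ (n - 1) * x powi (1 - int j)) q (l ! (j - 1)) =
        B_row (E_lattice0 p q x) n N j (lam j)"
      unfolding l[OF j] by (rule B_row_eq_qpoch[OF q x j])
  qed
  show ?thesis
    unfolding B_def Let_def B_lattice_def rows[symmetric] using l pair
    by (intro arg_cong2[where f = "(*)"] refl prod.cong) auto
qed

lemma lattice_reflection_E_lattice0:
  assumes p: "norm p < 1" and q: "q \<noteq> 0" and x: "x \<noteq> 0"
  shows "lattice_reflection (E_lattice0 p q x) q x"
  unfolding lattice_reflection_def
proof (intro allI impI)
  fix a b :: int assume ab: "(a, b) \<noteq> (0, 0)"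
  define y where "y = q powi a * x powi b"
  have "y \<noteq> 0"
    using q x by (simp add: y_def)
  moreover have "q powi (- a) * x powi (- b) = inverse y"
    by (simp add: y_def power_int_minus)
  ultimately show "E_lattice0 p q x (- a) (- b) = - (q powi (- a) * x powi (- b)) * E_lattice0 p q x a b"
    using ab E_inverse[OF p] by (auto simp: E_lattice0_def y_def[symmetric] divide_inverse mult.commute)
qed

lemma box_partition_Lambda:
  assumes "l \<in> Lambda n N"
  shows "box_partition n N (\<lambda>i. l ! (i - 1))"
  unfolding box_partition_def
proof (intro conjI ballI allI impI)
  fix i assume "i \<in> {1..n}"
  then show "0 \<le> l ! (i - 1)" "l ! (i - 1) \<le> int N"
    using assms by (auto simp: Lambda_def)
next
  fix i j :: nat assume "1 \<le> i" "i \<le> j" "j \<le> n"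
  then show "l ! (j - 1) \<le> l ! (i - 1)"
    using assms by (auto simp: Lambda_def)
qed

lemma length_conjp: "length (conjp N l) = N"
  by (simp add: conjp_def)

lemma conjp_nth:
  assumes "length l = n" and "i \<in> {1..N}"
  shows "conjp N l ! (i - 1) = conj_partition n (\<lambda>j. l ! (j - 1)) i"
proof -
  have "i - 1 < N" and "1 + (i - 1) = i"
    using assms(2) by auto
  then have "conjp N l ! (i - 1) = int (card {i'. i' < length l \<and> int i \<le> l ! i'})"
    unfolding conjp_def by (simp add: nth_upt del: upt_Suc)
  also have "{i'. i' < length l \<and> int i \<le> l ! i'} = (\<lambda>j. j - 1) ` {j\<in>{1..length l}. int i \<le> l ! (j - 1)}"
  proof (intro set_eqI iffI)
    fix j assume "j \<in> {i'. i' < length l \<and> int i \<le> l ! i'}"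
    then show "j \<in> (\<lambda>j. j - 1) ` {j\<in>{1..length l}. int i \<le> l ! (j - 1)}"
      by (intro image_eqI[of _ _ "Suc j"]) auto
  qed auto
  also have "card \<dots> = card {j\<in>{1..length l}. int i \<le> l ! (j - 1)}"
    by (intro card_image inj_onI) auto
  finally show ?thesis
    using assms(1) by (simp add: conj_partition_def)
qed

lemma A_conjp:
  assumes q: "q \<noteq> 0" and x: "x \<noteq> 0" and generic: "\<And>k m. E p (a * q powi k * x powi m) \<noteq> 0"
    and l: "l \<in> Lambda n N"
  shows "A p a q x n N l = A p (a * q * x) (inverse x) (inverse q) N n (conjp N l)"
proof -
  have len: "length l = n"
    using l by (simp add: Lambda_def)
  have lam: "box_partition n N (\<lambda>i. l ! (i - 1))"
    by (rule box_partition_Lambda[OF l])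
  have conj: "(\<lambda>k m. E_lattice p a q x (1 - m) (1 - k)) = E_lattice p (a * q * x) (inverse x) (inverse q)"
    using q x
    by (intro ext) (simp add: E_lattice_def power_int_diff power_int_inverse power_int_minus field_simps)
  have "A p a q x n N l = A_lattice (E_lattice p a q x) n N (\<lambda>i. l ! (i - 1))"
    using q x lam len by (rule A_eq_A_lattice) simp
  also have "\<dots> = A_lattice (\<lambda>k m. E_lattice p a q x (1 - m) (1 - k)) N n
      (conj_partition n (\<lambda>i. l ! (i - 1)))"
    using generic lam by (intro A_lattice_conj) (simp_all add: E_lattice_def)
  also have "\<dots> = A p (a * q * x) (inverse x) (inverse q) N n (conjp N l)"
    unfolding conj using q x
    by (intro A_eq_A_lattice[symmetric, OF _ _ box_partition_conj_partition[OF lam] length_conjp conjp_nth[OF len]]) simp_all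
  finally show ?thesis .
qed

lemma B_conjp:
  assumes p: "norm p < 1" and q: "q \<noteq> 0" and x: "x \<noteq> 0"
    and generic: "\<And>k m. (k, m) \<noteq> (0, 0) \<Longrightarrow> E p (q powi k * x powi m) \<noteq> 0"
    and l: "l \<in> Lambda n N"
  shows "B p q x n N l = B p (inverse x) (inverse q) N n (conjp N l)"
proof -
  have len: "length l = n"
    using l by (simp add: Lambda_def)
  have lam: "box_partition n N (\<lambda>i. l ! (i - 1))"
    by (rule box_partition_Lambda[OF l])
  have conj: "(\<lambda>k m. E_lattice0 p q x (- m) (- k)) = E_lattice0 p (inverse x) (inverse q)"
    by (intro ext) (auto simp: E_lattice0_def power_int_inverse power_int_minus mult.commute)
  have "B p q x n N l = B_lattice (E_lattice0 p q x) q x n N (\<lambda>i. l ! (i - 1))"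
    using q x lam len by (rule B_eq_B_lattice) simp
  also have "\<dots> = B_lattice (\<lambda>k m. E_lattice0 p q x (- m) (- k)) (inverse x) (inverse q) N n
      (conj_partition n (\<lambda>i. l ! (i - 1)))"
    using q x generic lam lattice_reflection_E_lattice0[OF p q x]
    by (intro B_lattice_conj) (auto simp: E_lattice0_def)
  also have "\<dots> = B p (inverse x) (inverse q) N n (conjp N l)"
    unfolding conj using q x
    by (intro B_eq_B_lattice[symmetric, OF _ _ box_partition_conj_partition[OF lam] length_conjp conjp_nth[OF len]]) simp_all
  finally show ?thesis .
qed

theorem mainTheorem3:
  fixes p a q x :: complex and n N :: nat and l :: "int list"
  assumes "norm p < 1" and "n \<ge> 1"
    and "a \<noteq> 0" and "q \<noteq> 0" and "x \<noteq> 0"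
    and generic1: "\<And>k m :: int. E p (a * q powi k * x powi m) \<noteq> 0"
    and generic2: "\<And>k m :: int. (k, m) \<noteq> (0, 0) \<Longrightarrow> E p (q powi k * x powi m) \<noteq> 0"
    and "l \<in> Lambda n N"
  shows "A p a q x n N l = A p (a * q * x) (inverse x) (inverse q) N n (conjp N l)
       \<and> B p q x n N l = B p (inverse x) (inverse q) N n (conjp N l)"
  using A_conjp[OF assms(4,5) generic1 assms(8)] B_conjp[OF assms(1,4,5) generic2 assms(8)] ..

end
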